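(* Let $r_g>0$, $E>0$ and $n\in\{2,3\}$. For $r>0$ let $X(r)>0$ be the unique positive solution of $$X^n+\sqrt{r_g/r}\;X-E=0,$$ and define $H(r)=(n+1)\sqrt{r_g/r}-\dfrac{nE}{X(r)}$. Then $H$ has exactly one zero $r_H$ on $(0,\infty)$, given by $$r_H=\frac{3r_g}{4E}\quad(n=2),\qquad r_H=r_g\Big(\frac{16}{27E^2}\Big)^{2/3}\quad(n=3),$$ and $H$ is differentiable at $r_H$ with $H'(r_H)\neq0$. Consequently, for any $r_1>r_H$, $\big|\int_{r}^{r_1}ds/H(s)\big|\to\infty$ (logarithmically) as $r\to r_H^+$.
   Context: Physical interpretation: for an ingoing massless test particle of energy $E$ with dispersion relation $F(\zeta)=\zeta^n$ in the Painlevé–Gullstrand Schwarzschild background ($N=f=1$, shift $N^r=-\sqrt{r_g/r}$), the coordinate time along the trajectory is $t=t_0+\int dr/H(r,E)$; the divergence of $t$ at $r_H$ defines an energy-dependent horizon at $r_H$. *)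

theory Defs
  imports "HOL-Analysis.Analysis" "HOL-Library.Landau_Symbols"
begin

definition Xsol :: "real \<Rightarrow> real \<Rightarrow> nat \<Rightarrow> real \<Rightarrow> real" where
  "Xsol rg E n r = (THE X. X > 0 \<and> X ^ n + sqrt (rg / r) * X - E = 0)"

definition Hfun :: "real \<Rightarrow> real \<Rightarrow> nat \<Rightarrow> real \<Rightarrow> real" where
  "Hfun rg E n r = real (n + 1) * sqrt (rg / r) - real n * E / Xsol rg E n r"

definition rHor :: "real \<Rightarrow> real \<Rightarrow> nat \<Rightarrow> real" where
  "rHor rg E n = (if n = 2 then 3 * rg / (4 * E)
                  else rg * (16 / (27 * E ^ 2)) powr (2 / 3))"

end

theory Submission
  imports Defs "HOL-Real_Asymp.Real_Asymp"
begin

text \<open>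
  Solving the defining equation for r shows that the root x = X(r) determines
  r = r_g x^2 / (E - x^n)^2, a smooth strictly increasing function of x on 0 < x < E^(1/n).
  Hence X is smooth, and H(r) = E/X - (n+1) X^(n-1) is smooth and strictly decreasing in r;
  it vanishes exactly where X^n = E/(n+1), which gives r_H.  Near a zero with nonvanishing
  continuous derivative, |H(s)| is squeezed between constant multiples of s - r_H, so the
  integral of 1/H diverges like the integral of 1/(s - r_H), i.e. logarithmically.
\<close>

lemma has_integral_inverse_shift:
  fixes a r b :: real
  assumes "a < r" "r \<le> b"
  shows "((\<lambda>s. 1 / (s - a)) has_integral ln (b - a) - ln (r - a)) {r..b}"
proof (rule fundamental_theorem_of_calculus[OF \<open>r \<le> b\<close>])
  fix x assume "x \<in> {r..b}"
  then have "x - a > 0" using assms by auto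
  then show "((\<lambda>s. ln (s - a)) has_vector_derivative 1 / (x - a)) (at x within {r..b})"
    by (auto intro!: derivative_eq_intros simp: has_real_derivative_iff_has_vector_derivative[symmetric])
qed

lemma linear_bounds_from_derivative_bounds:
  fixes H H' :: "real \<Rightarrow> real"
  assumes "H a = 0"
    and "\<And>s. a \<le> s \<Longrightarrow> s \<le> b \<Longrightarrow> (H has_real_derivative H' s) (at s)"
    and "\<And>s. a \<le> s \<Longrightarrow> s \<le> b \<Longrightarrow> m \<le> H' s \<and> H' s \<le> M"
    and "a < s" "s \<le> b"
  shows "m * (s - a) \<le> H s \<and> H s \<le> M * (s - a)"
proof -
  obtain z where z: "a < z" "z < s" "H s - H a = (s - a) * H' z"
    using MVT2[OF \<open>a < s\<close>, of H H'] assms(2,5) by auto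
  have "m \<le> H' z" "H' z \<le> M" using assms(3)[of z] z \<open>s \<le> b\<close> by auto
  then show ?thesis
    using z \<open>H a = 0\<close> \<open>a < s\<close> by (simp add: mult.commute mult_left_mono)
qed

lemma abs_integral_reciprocal_log_bounds:
  fixes H :: "real \<Rightarrow> real"
  assumes "a < r" "r \<le> b" "0 < m"
    and lin: "\<And>s. a < s \<Longrightarrow> s \<le> b \<Longrightarrow> m * (s - a) \<le> H s \<and> H s \<le> M * (s - a)"
    and "continuous_on {r..b} H"
  shows "(ln (b - a) - ln (r - a)) / M \<le> \<bar>integral {r..b} (\<lambda>s. 1 / H s)\<bar>
    \<and> \<bar>integral {r..b} (\<lambda>s. 1 / H s)\<bar> \<le> (ln (b - a) - ln (r - a)) / m"
proof -
  note log_int = has_integral_mult_right[OF has_integral_inverse_shift[OF assms(1,2)]]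
  have recip_bounds: "1 / M * (1 / (s - a)) \<le> 1 / H s" "1 / H s \<le> 1 / m * (1 / (s - a))"
    "0 < H s" if "s \<in> {r..b}" for s
  proof -
    have s: "a < s" "s \<le> b" using that assms(1) by auto
    then have pos: "0 < m * (s - a)" using assms(3) by simp
    have "m * (s - a) \<le> H s" "H s \<le> M * (s - a)" using lin[OF s] by auto
    with pos show "0 < H s" "1 / M * (1 / (s - a)) \<le> 1 / H s" "1 / H s \<le> 1 / m * (1 / (s - a))"
      by (auto intro: frac_le)
  qed
  have "continuous_on {r..b} (\<lambda>s. 1 / H s)"
    using assms(5) recip_bounds(3) by (intro continuous_intros) force+
  then have int: "((\<lambda>s. 1 / H s) has_integral integral {r..b} (\<lambda>s. 1 / H s)) {r..b}"
    by (rule integrable_continuous_interval[THEN integrable_integral])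
  have "1 / M * (ln (b - a) - ln (r - a)) \<le> integral {r..b} (\<lambda>s. 1 / H s)"
    using log_int int recip_bounds(1) by (rule has_integral_le)
  moreover have "integral {r..b} (\<lambda>s. 1 / H s) \<le> 1 / m * (ln (b - a) - ln (r - a))"
    using int log_int recip_bounds(2) by (rule has_integral_le)
  moreover have "0 \<le> ln (b - a) - ln (r - a)"
    using assms(1,2) by simp
  moreover have "m \<le> M"
  proof -
    have "m * (b - a) \<le> M * (b - a)" using lin[of b] assms(1,2) order_trans by force
    then show ?thesis using assms(1,2) by (simp add: mult_le_cancel_right)
  qed
  ultimately have "0 \<le> 1 / M * (ln (b - a) - ln (r - a))"
    using assms(3) by simp
  with \<open>1 / M * _ \<le> _\<close> \<open>_ \<le> 1 / m * _\<close> show ?thesis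
    by simp
qed

lemma abs_integral_reciprocal_log_divergence:
  fixes H H' :: "real \<Rightarrow> real"
  assumes "a < b" "H a = 0"
    and deriv: "\<And>s. a \<le> s \<Longrightarrow> s \<le> b \<Longrightarrow> (H has_real_derivative H' s) (at s)"
    and "continuous_on {a..b} H'"
    and pos: "\<And>s. a \<le> s \<Longrightarrow> s \<le> b \<Longrightarrow> H' s > 0"
  shows "filterlim (\<lambda>r. \<bar>integral {r..b} (\<lambda>s. 1 / H s)\<bar>) at_top (at_right a)
    \<and> (\<lambda>r. \<bar>integral {r..b} (\<lambda>s. 1 / H s)\<bar>) \<in> \<Theta>[at_right a](\<lambda>r. ln (r - a))"
proof -
  define f where "f r = \<bar>integral {r..b} (\<lambda>s. 1 / H s)\<bar>" for r
  define L where "L r = ln (b - a) - ln (r - a)" for r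
  have compact: "compact {a..b}" "{a..b} \<noteq> {}" using \<open>a < b\<close> by auto
  obtain x1 where x1: "x1 \<in> {a..b}" "\<forall>y\<in>{a..b}. H' x1 \<le> H' y"
    using continuous_attains_inf[OF compact assms(4)] by blast
  obtain x2 where x2: "x2 \<in> {a..b}" "\<forall>y\<in>{a..b}. H' y \<le> H' x2"
    using continuous_attains_sup[OF compact assms(4)] by blast
  have "0 < H' x1" "H' x1 \<le> H' x2" using pos x1 x2 by auto
  have lin: "H' x1 * (s - a) \<le> H s \<and> H s \<le> H' x2 * (s - a)" if "a < s" "s \<le> b" for s
    using linear_bounds_from_derivative_bounds[where m = "H' x1" and M = "H' x2", OF \<open>H a = 0\<close> deriv _ that]
      x1 x2 by auto
  have "0 \<le> L r \<and> L r / H' x2 \<le> f r \<and> f r \<le> L r / H' x1" if "a < r" "r \<le> b" for r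
  proof -
    have "continuous_on {r..b} H"
      using deriv that by (intro DERIV_continuous_on[where D = H']) (auto intro: has_field_derivative_at_within)
    then show ?thesis
      using abs_integral_reciprocal_log_bounds[OF that \<open>0 < H' x1\<close> lin] that
      by (simp add: f_def L_def)
  qed
  moreover have "eventually (\<lambda>r. a < r \<and> r \<le> b) (at_right a)"
    using \<open>a < b\<close> by (auto simp: eventually_at_right[OF \<open>a < b\<close>] intro!: exI[of _ b])
  ultimately have sandwich: "eventually (\<lambda>r. 0 \<le> L r \<and> L r / H' x2 \<le> f r \<and> f r \<le> L r / H' x1) (at_right a)"
    by (auto elim: eventually_mono)
  have "filterlim (\<lambda>r. L r / H' x2) at_top (at_right a)"
    unfolding L_def using \<open>0 < H' x1\<close> \<open>H' x1 \<le> H' x2\<close> by real_asymp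
  then have "filterlim f at_top (at_right a)"
    by (rule filterlim_at_top_mono) (use sandwich in \<open>auto elim: eventually_mono\<close>)
  moreover have "f \<in> \<Theta>[at_right a](L)"
  proof (rule bigthetaI'[of "1 / H' x2" "1 / H' x1"])
    show "eventually (\<lambda>r. 1 / H' x2 * norm (L r) \<le> norm (f r) \<and> norm (f r) \<le> 1 / H' x1 * norm (L r)) (at_right a)"
      using sandwich by eventually_elim (simp add: f_def)
  qed (use \<open>0 < H' x1\<close> \<open>H' x1 \<le> H' x2\<close> in auto)
  moreover have "L \<in> \<Theta>[at_right a](\<lambda>r. ln (r - a))"
    unfolding L_def by real_asymp
  ultimately show ?thesis
    unfolding f_def by (auto intro: landau_theta.trans)
qed

locale dispersion_horizon =
  fixes rg E :: real and n :: nat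
  assumes rg_pos: "rg > 0" and E_pos: "E > 0" and n_pos: "n \<ge> 1"
begin

definition coeff_of_root :: "real \<Rightarrow> real" where
  "coeff_of_root x = E / x - x ^ (n - 1)"

definition coeff_of_root' :: "real \<Rightarrow> real" where
  "coeff_of_root' x = - E / x\<^sup>2 - real (n - 1) * x ^ (n - 2)"

text \<open>
  x is the positive root for the radius r exactly when sqrt(r_g/r) = coeff_of_root x, so
  radius_of_root inverts X on the interval {x. 0 < x \<and> x ^ n < E}.
\<close>
definition radius_of_root :: "real \<Rightarrow> real" where
  "radius_of_root x = rg / (coeff_of_root x)\<^sup>2"

definition radius_of_root' :: "real \<Rightarrow> real" where
  "radius_of_root' x = - 2 * rg * coeff_of_root' x / (coeff_of_root x) ^ 3"

definition H_of_root :: "real \<Rightarrow> real" where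
  "H_of_root x = E / x - real (n + 1) * x ^ (n - 1)"

definition H_of_root' :: "real \<Rightarrow> real" where
  "H_of_root' x = - E / x\<^sup>2 - real (n + 1) * real (n - 1) * x ^ (n - 2)"

lemma power_eq_mult_power_pred: "(x :: real) ^ n = x * x ^ (n - 1)"
  using n_pos by (simp add: power_eq_if)

lemma root_poly_strict_mono:
  fixes a x y :: real
  assumes "0 \<le> a" "0 < x" "x < y"
  shows "x ^ n + a * x < y ^ n + a * y"
proof -
  have "x ^ n < y ^ n" using assms n_pos power_strict_mono[of x y n] by simp
  moreover have "a * x \<le> a * y" using assms by (intro mult_left_mono) auto
  ultimately show ?thesis by linarith
qed

lemma root_unique:
  fixes a x y :: real
  assumes "0 \<le> a" "0 < x" "0 < y" "x ^ n + a * x = E" "y ^ n + a * y = E"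
  shows "x = y"
  using root_poly_strict_mono[of a x y] root_poly_strict_mono[of a y x] assms
  by (cases x y rule: linorder_cases) auto

lemma root_exists:
  fixes a :: real
  assumes "0 \<le> a"
  shows "\<exists>x > 0. x ^ n + a * x = E"
proof -
  define B where "B = max 1 E"
  have "B \<le> B ^ n" using n_pos power_increasing[of 1 n B] by (simp add: B_def)
  then have "E \<le> B ^ n + a * B" using assms by (simp add: B_def add_increasing2)
  moreover have "0 ^ n + a * 0 \<le> E" using E_pos n_pos by (simp add: power_0_left)
  moreover have "0 \<le> B" "continuous_on {0..B} (\<lambda>x. x ^ n + a * x)"
    by (auto simp: B_def intro!: continuous_intros)
  ultimately obtain x where x: "0 \<le> x" "x \<le> B" "x ^ n + a * x = E"
    using IVT'[of "\<lambda>x. x ^ n + a * x" 0 E B] by blast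
  then have "x \<noteq> 0" using E_pos n_pos by (auto simp: power_0_left)
  with x show ?thesis by (intro exI[of _ x]) auto
qed

abbreviation X :: "real \<Rightarrow> real" where "X \<equiv> Xsol rg E n"

abbreviation H :: "real \<Rightarrow> real" where "H \<equiv> Hfun rg E n"

lemma X_root:
  assumes "r > 0"
  shows "X r > 0" "X r ^ n + sqrt (rg / r) * X r = E"
proof -
  have a: "sqrt (rg / r) \<ge> 0" using rg_pos assms by simp
  obtain x where x: "x > 0" "x ^ n + sqrt (rg / r) * x = E" using root_exists[OF a] by blast
  then have "X r = x"
    unfolding Xsol_def using root_unique[OF a] by (intro the_equality) auto
  with x show "X r > 0" "X r ^ n + sqrt (rg / r) * X r = E" by auto
qed

lemma coeff_of_root_eq: "0 < x \<Longrightarrow> coeff_of_root x = (E - x ^ n) / x"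
  using power_eq_mult_power_pred[of x] by (simp add: coeff_of_root_def field_simps)

lemma coeff_of_root_pos: "0 < x \<Longrightarrow> x ^ n < E \<Longrightarrow> 0 < coeff_of_root x"
  by (simp add: coeff_of_root_eq)

lemma coeff_of_root_X:
  assumes "r > 0"
  shows "coeff_of_root (X r) = sqrt (rg / r)"
proof -
  have "E - X r ^ n = sqrt (rg / r) * X r" using X_root(2)[OF assms] by linarith
  then show ?thesis using X_root(1)[OF assms] by (simp add: coeff_of_root_eq)
qed

lemma X_power_less:
  assumes "r > 0"
  shows "X r ^ n < E"
proof -
  have "0 < sqrt (rg / r) * X r" using X_root(1)[OF assms] rg_pos assms by simp
  then show ?thesis using X_root(2)[OF assms] by linarith
qed

lemma radius_of_root_X: "r > 0 \<Longrightarrow> radius_of_root (X r) = r"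
  using rg_pos by (simp add: radius_of_root_def coeff_of_root_X)

lemma X_radius_of_root:
  assumes "0 < x" "x ^ n < E"
  shows "X (radius_of_root x) = x"
proof -
  have coeff: "0 < coeff_of_root x" using coeff_of_root_pos[OF assms] .
  then have "0 < radius_of_root x" "sqrt (rg / radius_of_root x) = coeff_of_root x"
    using rg_pos by (simp_all add: radius_of_root_def)
  moreover have "x ^ n + coeff_of_root x * x = E"
    using assms by (simp add: coeff_of_root_eq)
  ultimately show ?thesis
    using X_root[of "radius_of_root x"] root_unique[of "coeff_of_root x" "X (radius_of_root x)" x] coeff assms
    by simp
qed

lemma H_eq_H_of_root:
  assumes "r > 0"
  shows "H r = H_of_root (X r)"
proof -
  have "H r = real (n + 1) * (E / X r - X r ^ (n - 1)) - real n * E / X r"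
    using coeff_of_root_X[OF assms] by (simp add: Hfun_def coeff_of_root_def)
  also have "\<dots> = H_of_root (X r)"
    by (simp add: H_of_root_def algebra_simps add_divide_distrib)
  finally show ?thesis .
qed

lemma coeff_of_root_has_derivative:
  "0 < x \<Longrightarrow> (coeff_of_root has_real_derivative coeff_of_root' x) (at x)"
  unfolding coeff_of_root_def[abs_def] coeff_of_root'_def
  by (auto intro!: derivative_eq_intros simp: power2_eq_square numeral_2_eq_2 field_simps)

lemma H_of_root_has_derivative:
  "0 < x \<Longrightarrow> (H_of_root has_real_derivative H_of_root' x) (at x)"
  unfolding H_of_root_def[abs_def] H_of_root'_def
  by (auto intro!: derivative_eq_intros simp: power2_eq_square numeral_2_eq_2 field_simps)

lemma radius_of_root_has_derivative:
  assumes "0 < x" "coeff_of_root x \<noteq> 0"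
  shows "(radius_of_root has_real_derivative radius_of_root' x) (at x)"
  unfolding radius_of_root_def[abs_def] radius_of_root'_def
  using assms
  by (auto intro!: derivative_eq_intros coeff_of_root_has_derivative
      simp: power2_eq_square power3_eq_cube field_simps)

lemma coeff_of_root'_neg:
  assumes "0 < x"
  shows "coeff_of_root' x < 0"
proof -
  have "0 < E / x\<^sup>2" "0 \<le> real (n - 1) * x ^ (n - 2)" using E_pos assms by auto
  then show ?thesis unfolding coeff_of_root'_def by linarith
qed

lemma H_of_root'_neg:
  assumes "0 < x"
  shows "H_of_root' x < 0"
proof -
  have "0 < E / x\<^sup>2" "0 \<le> real (n + 1) * real (n - 1) * x ^ (n - 2)" using E_pos assms by auto
  then show ?thesis unfolding H_of_root'_def by linarith
qed

lemma radius_of_root'_pos: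
  assumes "0 < x" "x ^ n < E"
  shows "0 < radius_of_root' x"
proof -
  have "2 * rg * coeff_of_root' x < 0"
    using coeff_of_root'_neg[OF assms(1)] rg_pos by (simp add: mult_pos_neg)
  moreover have "0 < coeff_of_root x ^ 3" using coeff_of_root_pos[OF assms] by simp
  ultimately show ?thesis
    unfolding radius_of_root'_def by (simp add: divide_neg_pos)
qed

lemma power_less_iff_less_root:
  fixes z :: real
  assumes "0 < z"
  shows "z ^ n < E \<longleftrightarrow> z < root n E"
proof -
  have "root n E ^ n = E" "0 < root n E" using n_pos E_pos by (auto intro: real_root_pow_pos)
  then show ?thesis
    using assms n_pos power_less_imp_less_base[of z n "root n E"] power_strict_mono[of z "root n E" n]
    by auto
qed

lemma isCont_X:
  assumes "r > 0"
  shows "isCont X r"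
proof -
  have X_range: "0 < X r" "X r < root n E"
    using X_root(1)[OF assms] X_power_less[OF assms] power_less_iff_less_root by auto
  define c d where "c = X r / 2" and "d = (X r + root n E) / 2"
  have z: "0 < z" "z ^ n < E" if "c \<le> z" "z \<le> d" for z
    using that X_range power_less_iff_less_root[of z] by (simp_all add: c_def d_def)
  have "isCont X (radius_of_root (X r))"
  proof (rule isCont_inverse_function2[where f = radius_of_root and g = X and x = "X r" and a = c and b = d])
    show "c < X r" "X r < d" using X_range by (simp_all add: c_def d_def)
    fix z assume "c \<le> z" "z \<le> d"
    note z = z[OF this]
    show "X (radius_of_root z) = z" using X_radius_of_root[OF z] .
    show "isCont radius_of_root z"
      using radius_of_root_has_derivative[OF z(1)] coeff_of_root_pos[OF z] by (simp add: DERIV_isCont)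
  qed
  then show ?thesis using radius_of_root_X[OF assms] by simp
qed

lemma X_has_derivative:
  assumes "r > 0"
  shows "(X has_real_derivative inverse (radius_of_root' (X r))) (at r)"
proof (rule DERIV_inverse_function[where a = 0 and b = "r + 1"])
  have X_r: "0 < X r" "X r ^ n < E" using X_root(1)[OF assms] X_power_less[OF assms] by auto
  show "(radius_of_root has_real_derivative radius_of_root' (X r)) (at (X r))"
    using radius_of_root_has_derivative[OF X_r(1)] coeff_of_root_pos[OF X_r] by simp
  show "radius_of_root' (X r) \<noteq> 0" using radius_of_root'_pos[OF X_r] by simp
  show "radius_of_root (X y) = y" if "0 < y" for y using radius_of_root_X that by simp
qed (use assms isCont_X in auto)

definition H' :: "real \<Rightarrow> real" where
  "H' r = H_of_root' (X r) / radius_of_root' (X r)"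

lemma H_has_derivative:
  assumes "r > 0"
  shows "(H has_real_derivative H' r) (at r)"
proof -
  have "((\<lambda>r. H_of_root (X r)) has_real_derivative H' r) (at r)"
    unfolding H'_def divide_inverse
    using H_of_root_has_derivative[OF X_root(1)[OF assms]] X_has_derivative[OF assms] by (rule DERIV_chain2)
  then show ?thesis
    by (rule has_field_derivative_transform_within_open[where S = "{0<..}"])
      (use assms H_eq_H_of_root in auto)
qed

lemma H'_neg: "r > 0 \<Longrightarrow> H' r < 0"
  using H_of_root'_neg[OF X_root(1)] radius_of_root'_pos[OF X_root(1) X_power_less]
  by (simp add: H'_def divide_neg_pos)

lemma isCont_H':
  assumes "r > 0"
  shows "isCont H' r"
proof -
  have X_r: "0 < X r" "X r ^ n < E" using X_root(1)[OF assms] X_power_less[OF assms] by auto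
  have "isCont (\<lambda>x. H_of_root' x / radius_of_root' x) (X r)"
    using X_r coeff_of_root_pos[OF X_r] radius_of_root'_pos[OF X_r]
    unfolding H_of_root'_def radius_of_root'_def coeff_of_root'_def coeff_of_root_def
    by (intro continuous_intros) (auto simp: coeff_of_root_def)
  then show ?thesis
    unfolding H'_def using isCont_o2[OF isCont_X[OF assms]] by blast
qed

definition horizon_root :: real where
  "horizon_root = root n (E / real (n + 1))"

lemma horizon_root_pos: "0 < horizon_root"
  and horizon_root_power: "horizon_root ^ n = E / real (n + 1)"
  and horizon_root_power_less: "horizon_root ^ n < E"
proof -
  have "0 < E / real (n + 1)" using E_pos by simp
  then show "0 < horizon_root" "horizon_root ^ n = E / real (n + 1)"
    using n_pos by (simp_all add: horizon_root_def real_root_pow_pos)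
  moreover have "E / real (n + 1) < E" using E_pos n_pos by (simp add: field_simps)
  ultimately show "horizon_root ^ n < E" by simp
qed

lemma H_of_root_eq_0_iff:
  assumes "0 < x"
  shows "H_of_root x = 0 \<longleftrightarrow> x = horizon_root"
proof -
  have "H_of_root x = (E - real (n + 1) * x ^ n) / x"
    using assms power_eq_mult_power_pred[of x] by (simp add: H_of_root_def field_simps)
  then have "H_of_root x = 0 \<longleftrightarrow> x ^ n = horizon_root ^ n"
    using assms by (auto simp: horizon_root_power field_simps)
  also have "\<dots> \<longleftrightarrow> x = horizon_root"
    using assms horizon_root_pos n_pos power_eq_imp_eq_base[of x n horizon_root] by auto
  finally show ?thesis .
qed

lemma radius_of_root_pos: "0 < x \<Longrightarrow> x ^ n < E \<Longrightarrow> 0 < radius_of_root x"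
  using coeff_of_root_pos[of x] rg_pos by (simp add: radius_of_root_def)

lemma radius_of_root_eq: "0 < x \<Longrightarrow> radius_of_root x = rg * x\<^sup>2 / (E - x ^ n)\<^sup>2"
  by (simp add: radius_of_root_def coeff_of_root_eq power_divide)

definition horizon_radius :: real where
  "horizon_radius = radius_of_root horizon_root"

lemma horizon_radius_pos: "0 < horizon_radius"
  unfolding horizon_radius_def using radius_of_root_pos[OF horizon_root_pos horizon_root_power_less] .

lemma H_zeros: "{r. r > 0 \<and> H r = 0} = {horizon_radius}"
proof -
  have "H r = 0 \<longleftrightarrow> r = horizon_radius" if "r > 0" for r
  proof -
    have "H r = 0 \<longleftrightarrow> X r = horizon_root"
      using H_eq_H_of_root[OF that] H_of_root_eq_0_iff[OF X_root(1)[OF that]] by simp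
    also have "\<dots> \<longleftrightarrow> r = horizon_radius"
      using radius_of_root_X[OF that] X_radius_of_root[OF horizon_root_pos horizon_root_power_less]
      by (auto simp: horizon_radius_def)
    finally show ?thesis .
  qed
  then show ?thesis using horizon_radius_pos by auto
qed

lemma H_log_divergence:
  assumes "r1 > horizon_radius"
  shows "filterlim (\<lambda>r. \<bar>integral {r..r1} (\<lambda>s. 1 / H s)\<bar>) at_top (at_right horizon_radius)
    \<and> (\<lambda>r. \<bar>integral {r..r1} (\<lambda>s. 1 / H s)\<bar>) \<in> \<Theta>[at_right horizon_radius](\<lambda>r. ln (r - horizon_radius))"
proof -
  have "filterlim (\<lambda>r. \<bar>integral {r..r1} (\<lambda>s. 1 / - H s)\<bar>) at_top (at_right horizon_radius)
    \<and> (\<lambda>r. \<bar>integral {r..r1} (\<lambda>s. 1 / - H s)\<bar>) \<in> \<Theta>[at_right horizon_radius](\<lambda>r. ln (r - horizon_radius))"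
  proof (rule abs_integral_reciprocal_log_divergence[OF assms, where H' = "\<lambda>r. - H' r"])
    show "- H horizon_radius = 0" using H_zeros by auto
    show "((\<lambda>r. - H r) has_real_derivative - H' s) (at s)" if "horizon_radius \<le> s" for s
      using H_has_derivative[of s] horizon_radius_pos that by (simp add: DERIV_minus)
    show "continuous_on {horizon_radius..r1} (\<lambda>r. - H' r)"
      using isCont_H' horizon_radius_pos by (intro continuous_on_minus continuous_at_imp_continuous_on) auto
    show "0 < - H' s" if "horizon_radius \<le> s" for s
      using H'_neg[of s] horizon_radius_pos that by simp
  qed
  then show ?thesis by simp
qed

lemma rHor_eq_horizon_radius:
  assumes "n \<in> {2, 3}"
  shows "rHor rg E n = horizon_radius"
proof (cases "n = 2")
  case True
  then have x2: "horizon_root\<^sup>2 = E / 3" and xn: "horizon_root ^ n = E / 3"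
    using horizon_root_power by simp_all
  have "horizon_radius = rg * (E / 3) / (E - E / 3)\<^sup>2"
    using radius_of_root_eq[OF horizon_root_pos] by (simp only: horizon_radius_def x2 xn)
  also have "\<dots> = 3 * rg / (4 * E)"
    using E_pos by (simp add: field_simps power2_eq_square)
  finally show ?thesis by (simp add: rHor_def True)
next
  case False
  with assms have n3: "n = 3" by auto
  define z where "z = 16 / (27 * E ^ 2)"
  define q where "q = 16 * horizon_root\<^sup>2 / (9 * E ^ 2)"
  have x3: "horizon_root ^ 3 = E / 4" and xn: "horizon_root ^ n = E / 4"
    using horizon_root_power n3 by simp_all
  have "q ^ 3 = 16 ^ 3 * (horizon_root ^ 3)\<^sup>2 / (9 ^ 3 * E ^ 6)"
    by (simp add: q_def power_mult_distrib power_divide flip: power_mult)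
  also have "\<dots> = z ^ 2"
    using E_pos by (simp add: x3 z_def power_divide field_simps)
  also have "\<dots> = (z powr (2 / 3)) ^ 3"
    using E_pos by (simp add: z_def powr_power)
  finally have "q = z powr (2 / 3)"
    using horizon_root_pos E_pos by (simp add: q_def power_eq_iff_eq_base)
  moreover have "horizon_radius = rg * q"
    using E_pos
    by (simp add: horizon_radius_def radius_of_root_eq[OF horizon_root_pos] xn q_def field_simps
        power2_eq_square)
  ultimately show ?thesis by (simp add: rHor_def n3 z_def)
qed

end

theorem mainTheorem5:
  fixes rg E :: real and n :: nat
  assumes "rg > 0" and "E > 0" and "n \<in> {2, 3}"
  shows "{r. r > 0 \<and> Hfun rg E n r = 0} = {rHor rg E n}
    \<and> (\<exists>D. (Hfun rg E n has_real_derivative D) (at (rHor rg E n)) \<and> D \<noteq> 0)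
    \<and> (\<forall>r1 > rHor rg E n.
         filterlim (\<lambda>r. \<bar>integral {r..r1} (\<lambda>s. 1 / Hfun rg E n s)\<bar>) at_top
                   (at_right (rHor rg E n))
       \<and> (\<lambda>r. \<bar>integral {r..r1} (\<lambda>s. 1 / Hfun rg E n s)\<bar>)
           \<in> \<Theta>[at_right (rHor rg E n)](\<lambda>r. ln (r - rHor rg E n)))"
proof -
  interpret dispersion_horizon rg E n
    using assms by unfold_locales auto
  have "\<exists>D. (H has_real_derivative D) (at horizon_radius) \<and> D \<noteq> 0"
    using H_has_derivative[OF horizon_radius_pos] H'_neg[OF horizon_radius_pos]
    by (intro exI[of _ "H' horizon_radius"]) simp
  then show ?thesis
    unfolding rHor_eq_horizon_radius[OF assms(3)] using H_zeros H_log_divergence by simp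
qed

end
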